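(* Let $C_{SR}>C_{SD}=b=\log(1+m)>0$ (with $m>0$) and $c>0$. Let $J$ be either $J_{IA}(\alpha_2,\alpha_3)=b+\log(1+c\alpha_2/\alpha_3)$ or $J_{EA}(\alpha_2,\alpha_3)=\log(1+m+c\alpha_2/\alpha_3)$, with $\alpha_3J:=0$ when $\alpha_3=0$. On the simplex $\Delta=\{(\alpha_1,\alpha_2,\alpha_3)\in[0,1]^3:\alpha_1+\alpha_2+\alpha_3=1\}$ define $$R^{(TS)}(\alpha_1,\alpha_2,\alpha_3)=\min\{\alpha_1C_{SR},\ (\alpha_1+\alpha_2)C_{SD}+\alpha_3J(\alpha_2,\alpha_3)\}.$$ Then every maximizer $(\alpha_1^*,\alpha_2^*,\alpha_3^* )$ of $R^{(TS)}$ over $\Delta$ satisfies $$\alpha_1^*C_{SR}=(\alpha_1^*+\alpha_2^* )C_{SD}+\alpha_3^*J(\alpha_2^*,\alpha_3^* ).$$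
   Context: $\log$ is the natural logarithm. This concerns the time-switching relay protocol: $\alpha_1,\alpha_2,\alpha_3$ are the time fractions of the relay's listening sub-phase, energy-harvesting sub-phase and collaboration phase; in the paper's setting $C_{SR}=\log(1+P_SH_{SR}/\sigma_R^2)$, $C_{SD}=\log(1+P_SH_{SD}/\sigma_D^2)$, $m=P_SH_{SD}/\sigma_D^2$, $c=\eta H_{SR}H_{RD}P_S/\sigma_D^2$. IA = mutual-information accumulation, EA = energy accumulation at the destination. *)

theory Defs
  imports Complex_Main
begin

definition J_IA :: "real \<Rightarrow> real \<Rightarrow> real \<Rightarrow> real \<Rightarrow> real" where
  "J_IA b c a2 a3 = b + ln (1 + c * a2 / a3)"

definition J_EA :: "real \<Rightarrow> real \<Rightarrow> real \<Rightarrow> real \<Rightarrow> real" where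
  "J_EA m c a2 a3 = ln (1 + m + c * a2 / a3)"

definition weighted_J :: "(real \<Rightarrow> real \<Rightarrow> real) \<Rightarrow> real \<Rightarrow> real \<Rightarrow> real" where
  "weighted_J J a2 a3 = (if a3 = 0 then 0 else a3 * J a2 a3)"

definition simplex3 :: "(real \<times> real \<times> real) set" where
  "simplex3 = {(a1, a2, a3). 0 \<le> a1 \<and> a1 \<le> 1 \<and> 0 \<le> a2 \<and> a2 \<le> 1 \<and> 0 \<le> a3 \<and> a3 \<le> 1
                  \<and> a1 + a2 + a3 = 1}"

definition R_TS :: "real \<Rightarrow> real \<Rightarrow> (real \<Rightarrow> real \<Rightarrow> real) \<Rightarrow> real \<Rightarrow> real \<Rightarrow> real \<Rightarrow> real" where
  "R_TS CSR CSD J a1 a2 a3 = min (a1 * CSR) ((a1 + a2) * CSD + weighted_J J a2 a3)"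

end

theory Submission
  imports Defs
begin

text \<open>At a maximizer the two terms of the minimum must balance. Otherwise one can move a little
  time between the sub-phases so that the smaller term strictly increases while the larger one
  changes continuously and hence stays above the old minimum: if the relay-link term is smaller,
  shift time from harvesting to listening; if the destination term is smaller, shift time from
  listening to harvesting, opening a collaboration phase of length \<open>t\<close> when \<open>\<alpha>\<^sub>3 = 0\<close>, which
  pays off because \<open>J > b\<close> as soon as any energy has been harvested. The constant value \<open>b\<close>,
  attained on the face \<open>\<alpha>\<^sub>3 = 0\<close>, rules out the degenerate configurations.\<close>

lemma min_increases_along_path:
  fixes f g :: "real \<Rightarrow> real"
  assumes "0 < d" and "f 0 < g 0" and "continuous_on {0..d} g"
    and "\<And>t. 0 < t \<Longrightarrow> t \<le> d \<Longrightarrow> f 0 < f t"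
  obtains t where "0 < t" "t \<le> d" "min (f 0) (g 0) < min (f t) (g t)"
proof -
  have "(g \<longlongrightarrow> g 0) (at_right 0)"
    using assms(1,3)
    by (metis at_within_Icc_at_right atLeastAtMost_iff continuous_on_def order_refl less_imp_le)
  then have "eventually (\<lambda>t. f 0 < g t) (at_right 0)"
    using assms(2) by (rule order_tendstoD)
  then obtain e where "0 < e" and e: "\<And>t. 0 < t \<Longrightarrow> t < e \<Longrightarrow> f 0 < g t"
    by (auto simp: eventually_at_right_field)
  define t where "t = min (e / 2) d"
  have "0 < t" "t \<le> d" "t < e"
    using \<open>0 < e\<close> assms(1) by (auto simp: t_def)
  then show thesis
    using that assms(2,4) e by (simp add: min_def)
qed

lemma strict_mono_on_ln_affine:
  fixes a K c y :: real
  assumes "0 < K" "0 < c" "0 < y"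
  shows "strict_mono_on {0..} (\<lambda>x. a + ln (K + c * x / y))"
proof (rule strict_mono_onI)
  fix x x' :: real assume "x \<in> {0..}" "x < x'"
  then have "0 \<le> c * x / y" using assms by simp
  then have "0 < K + c * x / y" using assms by linarith
  moreover have "c * x / y < c * x' / y"
    using assms \<open>x < x'\<close> by (simp add: divide_strict_right_mono)
  ultimately show "a + ln (K + c * x / y) < a + ln (K + c * x' / y)" by simp
qed

lemma continuous_on_ln_affine:
  fixes a K c y :: real
  assumes "0 < K" "0 \<le> c" "0 < y"
  shows "continuous_on {0..} (\<lambda>x. a + ln (K + c * x / y))"
proof -
  have "0 < K + c * x / y" if "x \<in> {0..}" for x
    using assms that by (simp add: add_pos_nonneg)
  then show ?thesis using assms by (intro continuous_intros) (force+)
qed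

text \<open>Here \<open>b\<close> plays the role of \<open>C\<^sub>S\<^sub>D\<close>: with no harvested energy the relay adds nothing,
  so \<open>J 0 y = b\<close>.\<close>
locale ts_rates =
  fixes CSR b :: real and J :: "real \<Rightarrow> real \<Rightarrow> real"
  assumes b_pos: "0 < b" and CSR_gt: "b < CSR"
    and J_zero: "\<And>y. 0 < y \<Longrightarrow> J 0 y = b"
    and J_strict_mono: "\<And>y. 0 < y \<Longrightarrow> strict_mono_on {0..} (\<lambda>x. J x y)"
    and J_continuous: "\<And>y. 0 < y \<Longrightarrow> continuous_on {0..} (\<lambda>x. J x y)"
begin

lemma J_gt_b: "0 < y \<Longrightarrow> 0 < x \<Longrightarrow> b < J x y"
  using J_zero J_strict_mono by (metis atLeast_iff less_imp_le order_refl strict_mono_onD)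

lemma destination_rate_boundary:
  assumes "(a1, a2, a3) \<in> simplex3" and "a2 = 0 \<or> a3 = 0"
  shows "(a1 + a2) * b + weighted_J J a2 a3 = b"
  using assms J_zero[of a3]
  by (auto simp: simplex3_def weighted_J_def distrib_right[symmetric])

lemma R_TS_attains_b: "\<exists>(x1, x2, x3) \<in> simplex3. R_TS CSR b J x1 x2 x3 = b"
proof -
  have "(b / CSR, 1 - b / CSR, 0) \<in> simplex3"
    using b_pos CSR_gt by (auto simp: simplex3_def divide_le_eq)
  moreover have "R_TS CSR b J (b / CSR) (1 - b / CSR) 0 = b"
    using b_pos CSR_gt by (simp add: R_TS_def weighted_J_def)
  ultimately show ?thesis by blast
qed

lemma improvable_if_relay_limited:
  assumes "(a1, a2, a3) \<in> simplex3" and "b \<le> R_TS CSR b J a1 a2 a3"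
    and less: "a1 * CSR < (a1 + a2) * b + weighted_J J a2 a3"
  shows "\<exists>(x1, x2, x3) \<in> simplex3. R_TS CSR b J a1 a2 a3 < R_TS CSR b J x1 x2 x3"
proof -
  have "a2 \<noteq> 0 \<and> a3 \<noteq> 0"
    using destination_rate_boundary[OF assms(1)] assms(2,3) by (auto simp: R_TS_def)
  then have "0 < a2" "0 < a3" using assms(1) by (auto simp: simplex3_def)
  define f where "f t = (a1 + t) * CSR" for t
  define g where "g t = (a1 + a2) * b + a3 * J (a2 - t) a3" for t
  have "continuous_on {0..a2} g"
    unfolding g_def using \<open>0 < a3\<close>
    by (intro continuous_intros continuous_on_compose2[OF J_continuous[of a3]]) auto
  moreover have "f 0 < g 0"
    using less \<open>0 < a3\<close> by (simp add: f_def g_def weighted_J_def)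
  moreover have "f 0 < f t" if "0 < t" for t
    using that b_pos CSR_gt by (simp add: f_def)
  ultimately obtain t where t: "0 < t" "t \<le> a2" "min (f 0) (g 0) < min (f t) (g t)"
    using min_increases_along_path[OF \<open>0 < a2\<close>] by blast
  then have "(a1 + t, a2 - t, a3) \<in> simplex3" using assms(1) by (auto simp: simplex3_def)
  moreover have "R_TS CSR b J a1 a2 a3 < R_TS CSR b J (a1 + t) (a2 - t) a3"
    using t \<open>0 < a3\<close> by (simp add: R_TS_def weighted_J_def f_def g_def)
  ultimately show ?thesis by blast
qed

lemma improvable_if_destination_limited:
  assumes "(a1, a2, a3) \<in> simplex3" and "b \<le> R_TS CSR b J a1 a2 a3"
    and less: "(a1 + a2) * b + weighted_J J a2 a3 < a1 * CSR"
  shows "\<exists>(x1, x2, x3) \<in> simplex3. R_TS CSR b J a1 a2 a3 < R_TS CSR b J x1 x2 x3"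
proof -
  have "0 < a1 * CSR"
    using assms(2,3) b_pos by (simp add: R_TS_def)
  then have "0 < a1"
    using b_pos CSR_gt by (simp add: zero_less_mult_iff)
  show ?thesis
  proof (cases "a3 = 0")
    case False
    then have "0 < a3" using assms(1) by (simp add: simplex3_def)
    define f where "f t = (a1 + a2) * b + a3 * J (a2 + t) a3" for t
    define g where "g t = (a1 - t) * CSR" for t
    have "continuous_on {0..a1} g" unfolding g_def by (intro continuous_intros)
    moreover have "f 0 < g 0"
      using less False by (simp add: f_def g_def weighted_J_def)
    moreover have "f 0 < f t" if "0 < t" for t
      using that \<open>0 < a3\<close> assms(1) strict_mono_onD[OF J_strict_mono[OF \<open>0 < a3\<close>], of a2 "a2 + t"]
      by (simp add: f_def simplex3_def)
    ultimately obtain t where t: "0 < t" "t \<le> a1" "min (f 0) (g 0) < min (f t) (g t)"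
      using min_increases_along_path[OF \<open>0 < a1\<close>] by blast
    then have "(a1 - t, a2 + t, a3) \<in> simplex3" using assms(1) by (auto simp: simplex3_def)
    moreover have "R_TS CSR b J a1 a2 a3 < R_TS CSR b J (a1 - t) (a2 + t) a3"
      using t False by (simp add: R_TS_def weighted_J_def f_def g_def min.commute)
    ultimately show ?thesis by blast
  next
    case True
    define f where "f t = (a1 - 2 * t + (a2 + t)) * b + weighted_J J (a2 + t) t" for t
    define g where "g t = (a1 - 2 * t) * CSR" for t
    have "continuous_on {0..a1 / 2} g" unfolding g_def by (intro continuous_intros)
    moreover have "f 0 < g 0"
      using less True by (simp add: f_def g_def weighted_J_def)
    moreover have "f 0 < f t" if "0 < t" for t
    proof -
      have "a1 + a2 = 1" using True assms(1) by (simp add: simplex3_def)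
      moreover have "t * b < t * J (a2 + t) t"
        using that assms(1) J_gt_b[of t "a2 + t"] by (simp add: simplex3_def)
      ultimately show ?thesis
        using that by (simp add: f_def weighted_J_def algebra_simps)
    qed
    ultimately obtain t where t: "0 < t" "t \<le> a1 / 2" "min (f 0) (g 0) < min (f t) (g t)"
      using min_increases_along_path[of "a1 / 2"] \<open>0 < a1\<close> by (metis half_gt_zero)
    then have "(a1 - 2 * t, a2 + t, t) \<in> simplex3" using assms(1) True by (auto simp: simplex3_def)
    moreover have "R_TS CSR b J a1 a2 a3 < R_TS CSR b J (a1 - 2 * t) (a2 + t) t"
      using t True by (simp add: R_TS_def f_def g_def min.commute)
    ultimately show ?thesis by blast
  qed
qed

end

lemma ts_rates_J_IA:
  assumes "0 < m" "0 < c" "b = ln (1 + m)" "b < CSR"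
  shows "ts_rates CSR b (J_IA b c)"
  using assms strict_mono_on_ln_affine[of 1 c] continuous_on_ln_affine[of 1 c]
  by unfold_locales (auto simp: J_IA_def)

lemma ts_rates_J_EA:
  assumes "0 < m" "0 < c" "b = ln (1 + m)" "b < CSR"
  shows "ts_rates CSR b (J_EA m c)"
  using assms strict_mono_on_ln_affine[of "1 + m" c _ 0] continuous_on_ln_affine[of "1 + m" c _ 0]
  by unfold_locales (auto simp: J_EA_def)

theorem lemma4:
  fixes CSR CSD b m c :: real and J :: "real \<Rightarrow> real \<Rightarrow> real"
    and a1 a2 a3 :: real
  assumes "m > 0" and "c > 0"
    and "b = ln (1 + m)" and "CSD = b" and "CSR > CSD"
    and "J = J_IA b c \<or> J = J_EA m c"
    and "(a1, a2, a3) \<in> simplex3"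
    and "\<forall>(x1, x2, x3) \<in> simplex3. R_TS CSR CSD J x1 x2 x3 \<le> R_TS CSR CSD J a1 a2 a3"
  shows "a1 * CSR = (a1 + a2) * CSD + weighted_J J a2 a3"
proof -
  interpret ts_rates CSR b J
    using assms(1-6) ts_rates_J_IA ts_rates_J_EA by auto
  have max: "\<forall>(x1, x2, x3) \<in> simplex3. R_TS CSR b J x1 x2 x3 \<le> R_TS CSR b J a1 a2 a3"
    using assms(4,8) by simp
  then have "b \<le> R_TS CSR b J a1 a2 a3"
    using R_TS_attains_b by fastforce
  show ?thesis
  proof (rule ccontr)
    assume "\<not> ?thesis"
    then have "a1 * CSR < (a1 + a2) * b + weighted_J J a2 a3 \<or>
        (a1 + a2) * b + weighted_J J a2 a3 < a1 * CSR"
      using assms(4) by (simp add: neq_iff)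
    then obtain x1 x2 x3 where "(x1, x2, x3) \<in> simplex3"
      and "R_TS CSR b J a1 a2 a3 < R_TS CSR b J x1 x2 x3"
      using improvable_if_relay_limited[OF assms(7)] improvable_if_destination_limited[OF assms(7)]
        \<open>b \<le> R_TS CSR b J a1 a2 a3\<close> by blast
    with max show False by fastforce
  qed
qed

end
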